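(* Run the Algorithm with an arbitrary admissible weight sequence. Let $\epsilon\in(0,1)$ and let $\mathcal T_1\ge 0$ be an integer such that (on the realization considered) $(1-\epsilon)\lambda_{\min} I\preceq\tilde H_t\preceq(1+\epsilon)\lambda_{\max} I$ for all $t\ge\mathcal T_1$ (e.g. on the event $\mathcal E$ of the positive-definiteness lemma under uniform averaging). Set $$\phi=\frac{4\rho\beta(1-\beta)(1-\epsilon)}{\kappa^2(1+\epsilon)}.$$ Then $f(x_{t+1})-f(x^\star)\le (1-\phi)\bigl(f(x_t)-f(x^\star)\bigr)$ for all $t\ge\mathcal T_1$, and consequently, for all $t\ge \mathcal T_1$, $$\|x_t-x^\star\|\le\Bigl\{\tfrac{2}{\lambda_{\min}}\bigl(f(x_0)-f(x^\star)\bigr)(1-\phi)^{t-\mathcal T_1}\Bigr\}^{1/2},\qquad \|x_t-x^\star\|_{H^\star}\le\Bigl\{2\kappa\bigl(f(x_0)-f(x^\star)\bigr)(1-\phi)^{t-\mathcal T_1}\Bigr\}^{1/2}.$$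
   Context: Setting. $f:\mathbb{R}^d\to\mathbb{R}$ is twice continuously differentiable with Hessian $H(x)=\nabla^2 f(x)$ satisfying $\lambda_{\min} I\preceq H(x)\preceq \lambda_{\max} I$ for all $x\in\mathbb{R}^d$, where $0<\lambda_{\min}\le\lambda_{\max}$; $\kappa=\lambda_{\max}/\lambda_{\min}$; $x^\star$ is the unique minimizer of $f$ and $H^\star=H(x^\star)$. $\|\cdot\|$ is the Euclidean norm for vectors and the spectral norm for matrices; $\|v\|_A=\sqrt{v^\top A v}$ for $A\succeq 0$. Stochastic Hessian oracle: queried at $x$, it returns $\hat H(x)=H(x)+E(x)$, where $E(x)$ is a random symmetric $d\times d$ matrix. Algorithm (stochastic Newton with Hessian averaging). Inputs: deterministic $x_0\in\mathbb{R}^d$, a nondecreasing nonnegative weight sequence $(w_t)_{t\ge -1}$ with $w_{-1}=0$ and $w_t>0$ for $t\ge 0$, constants $\beta\in(0,1/2)$, $\rho\in(0,1)$, and $\tilde H_{-1}=0$. For $t=0,1,2,\dots$: (1) query the oracle at $x_t$ to obtain $\hat H_t=H_t+E_t$, $H_t=H(x_t)$, where conditionally on all randomness generated before iteration $t$, $E_t$ has the law of $E(x_t)$; (2) set $\tilde H_t=\frac{w_{t-1}}{w_t}\tilde H_{t-1}+\bigl(1-\frac{w_{t-1}}{w_t}\bigr)\hat H_t$; (3) if the system $\tilde H_t p=-\nabla f(x_t)$ has no solution, or its solution $p_t$ satisfies $\nabla f(x_t)^\top p_t\ge 0$, set $x_{t+1}=x_t$; (4) otherwise let $\mu_t=\rho^{j_t}$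 where $j_t$ is the smallest nonnegative integer with $f(x_t+\mu_t p_t)\le f(x_t)+\mu_t\beta\nabla f(x_t)^\top p_t$, and set $x_{t+1}=x_t+\mu_t p_t$. *)

theory Defs
  imports "HOL-Analysis.Analysis"
begin

definition loewner_le :: "real^'n^'n \<Rightarrow> real^'n^'n \<Rightarrow> bool" where
  "loewner_le A B \<longleftrightarrow> (\<forall>v. v \<bullet> (A *v v) \<le> v \<bullet> (B *v v))"

definition wnorm :: "real^'n^'n \<Rightarrow> real^'n \<Rightarrow> real" where
  "wnorm A v = sqrt (v \<bullet> (A *v v))"

text \<open>Averaged Hessian: Htil_{-1} = 0, w_{-1} = 0, so Htil_0 = Hhat_0.\<close>
fun Htil_seq :: "(int \<Rightarrow> real) \<Rightarrow> (nat \<Rightarrow> real^'n^'n) \<Rightarrow> nat \<Rightarrow> real^'n^'n" where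
  "Htil_seq w Hh 0 = (w (-1) / w 0) *\<^sub>R 0 + (1 - w (-1) / w 0) *\<^sub>R Hh 0"
| "Htil_seq w Hh (Suc t) = (w (int t) / w (int (Suc t))) *\<^sub>R Htil_seq w Hh t
      + (1 - w (int t) / w (int (Suc t))) *\<^sub>R Hh (Suc t)"

text \<open>One step (3)/(4) of the algorithm, given the current Hessian estimate Ht,
  current iterate xt, chosen solution p of Ht p = -grad f(xt) (if any) and next iterate xn.\<close>
definition alg_step ::
  "(real^'n \<Rightarrow> real) \<Rightarrow> (real^'n \<Rightarrow> real^'n) \<Rightarrow> real \<Rightarrow> real \<Rightarrow>
   real^'n^'n \<Rightarrow> real^'n \<Rightarrow> real^'n \<Rightarrow> real^'n \<Rightarrow> bool" where
  "alg_step f g \<beta> \<rho> Ht xt p xn \<longleftrightarrow>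
     ((\<nexists>q. Ht *v q = - g xt) \<and> xn = xt)
   \<or> (Ht *v p = - g xt \<and> g xt \<bullet> p \<ge> 0 \<and> xn = xt)
   \<or> (Ht *v p = - g xt \<and> g xt \<bullet> p < 0 \<and>
       xn = xt + (\<rho> ^ (LEAST j. f (xt + \<rho> ^ j *\<^sub>R p) \<le> f xt + \<rho> ^ j * \<beta> * (g xt \<bullet> p))) *\<^sub>R p)"

end

theory Submission
  imports Defs
begin

text \<open>
  Let \<open>M\<close> be the averaged Hessian, \<open>M p = - \<nabla>f(x)\<close> the Newton direction and
  \<open>D = p\<^sup>T M p\<close>. The upper Hessian bound gives the quadratic model
  \<open>f(x + \<nu> p) \<le> f(x) - \<nu> D + \<nu>\<^sup>2 lmax |p|\<^sup>2 / 2\<close>, and \<open>|p|\<^sup>2 \<le> D / ((1 - \<epsilon>) lmin)\<close>.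
  Hence backtracking either accepts the unit step or stops at a step of length at least
  \<open>2 \<rho> (1 - \<beta>) (1 - \<epsilon>) lmin / lmax\<close>; either way \<open>f\<close> drops by at least
  \<open>2 \<rho> \<beta> (1 - \<beta>) (1 - \<epsilon>) D / \<kappa>\<close>. The Hessian is symmetric (Schwarz), hence so is \<open>M\<close>,
  and \<open>M \<preceq> (1 + \<epsilon>) lmax I\<close> yields \<open>|\<nabla>f(x)|\<^sup>2 = |M p|\<^sup>2 \<le> (1 + \<epsilon>) lmax D\<close>. The
  Polyak--Lojasiewicz inequality \<open>f(x) - f\<^sup>\<star> \<le> |\<nabla>f(x)|\<^sup>2 / (2 lmin)\<close> turns this drop into
  the factor \<open>1 - \<phi>\<close>. Every step is monotone, so iterating from \<open>T1\<close> bounds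
  \<open>f(x\<^sub>t) - f\<^sup>\<star>\<close>, and strong convexity converts that into the two distance bounds.
\<close>

section \<open>Quadratic forms\<close>

lemma loewner_le_scaled_identity_left:
  "loewner_le (c *\<^sub>R mat 1) M \<Longrightarrow> c * (v \<bullet> v) \<le> v \<bullet> (M *v v)"
  unfolding loewner_le_def
  by (metis inner_scaleR_right matrix_vector_mul_lid scaleR_matrix_vector_assoc)

lemma loewner_le_scaled_identity_right:
  "loewner_le M (c *\<^sub>R mat 1) \<Longrightarrow> v \<bullet> (M *v v) \<le> c * (v \<bullet> v)"
  unfolding loewner_le_def
  by (metis inner_scaleR_right matrix_vector_mul_lid scaleR_matrix_vector_assoc)

lemma loewner_le_scaled_identity_bounds_le:
  fixes M :: "real^'n^'n"
  assumes "loewner_le (a *\<^sub>R mat 1) M" and "loewner_le M (b *\<^sub>R mat 1)"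
  shows "a \<le> b"
proof -
  obtain v :: "real^'n" where "v \<noteq> 0" using zero_neq_one by blast
  have "a * (v \<bullet> v) \<le> b * (v \<bullet> v)"
    using loewner_le_scaled_identity_left[OF assms(1)] loewner_le_scaled_identity_right[OF assms(2)]
    by (rule order_trans)
  then show ?thesis using \<open>v \<noteq> 0\<close> by simp
qed

lemma transpose_add: "transpose (A + B) = transpose A + transpose (B :: 'a::semiring_1^'n^'m)"
  by (simp add: transpose_def vec_eq_iff)

lemma transpose_Htil_seq:
  assumes "\<And>s. transpose (Hh s) = (Hh s :: real^'n^'n)"
  shows "transpose (Htil_seq w Hh t) = Htil_seq w Hh t"
  by (induction t) (simp_all add: assms transpose_add transpose_scalar)

lemma inner_axis_matrix_vector_axis: "axis i (1::real) \<bullet> (M *v axis j 1) = (M::real^'n^'m) $ i $ j"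
  by (simp add: matrix_vector_mult_basis inner_axis' column_def)

lemma symmetric_matrix_inner_commute:
  fixes M :: "real^'n^'n"
  assumes "transpose M = M"
  shows "a \<bullet> (M *v b) = b \<bullet> (M *v a)"
proof -
  have "a \<bullet> (M *v b) = (a v* M) \<bullet> b" by (simp add: dot_lmul_matrix)
  also have "a v* M = M *v a" using transpose_matrix_vector[of M a] assms by simp
  finally show ?thesis by (simp add: inner_commute)
qed

lemma quadratic_form_add_scaleR:
  fixes M :: "real^'n^'n"
  assumes "transpose M = M"
  shows "(a + t *\<^sub>R b) \<bullet> (M *v (a + t *\<^sub>R b))
     = a \<bullet> (M *v a) + 2 * t * (a \<bullet> (M *v b)) + t\<^sup>2 * (b \<bullet> (M *v b))"
  using symmetric_matrix_inner_commute[OF assms, of b a]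
  by (simp add: matrix_vector_right_distrib matrix_scaleR_vector_ac inner_add_left inner_add_right
      scaleR_matrix_vector_assoc[symmetric] algebra_simps power2_eq_square)

lemma psd_cauchy_schwarz:
  fixes M :: "real^'n^'n"
  assumes sym: "transpose M = M" and psd: "\<And>v. 0 \<le> v \<bullet> (M *v v)"
  shows "(a \<bullet> (M *v b))\<^sup>2 \<le> (a \<bullet> (M *v a)) * (b \<bullet> (M *v b))"
proof -
  define A B C where "A = a \<bullet> (M *v a)" and "B = a \<bullet> (M *v b)" and "C = b \<bullet> (M *v b)"
  have nonneg: "0 \<le> A + 2 * t * B + t\<^sup>2 * C" for t
    using psd[of "a + t *\<^sub>R b"] quadratic_form_add_scaleR[OF sym] by (simp add: A_def B_def C_def)
  have "B\<^sup>2 \<le> A * C"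
  proof (cases "C = 0")
    case True
    have "0 \<le> A + 2 * (- (A + 1) / (2 * B)) * B" if "B \<noteq> 0"
      using nonneg[of "- (A + 1) / (2 * B)"] True by simp
    then show ?thesis using True by (cases "B = 0") (auto simp: field_simps)
  next
    case False
    then have "0 < C" using psd[of b] by (simp add: C_def)
    moreover have "0 \<le> A + 2 * (- B / C) * B + (- B / C)\<^sup>2 * C" by (rule nonneg)
    ultimately show ?thesis by (simp add: field_simps power2_eq_square)
  qed
  then show ?thesis by (simp add: A_def B_def C_def)
qed

lemma psd_image_inner_le:
  fixes M :: "real^'n^'n"
  assumes sym: "transpose M = M" and psd: "\<And>v. 0 \<le> v \<bullet> (M *v v)"
    and up: "\<And>v. v \<bullet> (M *v v) \<le> L * (v \<bullet> v)" and L: "0 \<le> L"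
  shows "(M *v p) \<bullet> (M *v p) \<le> L * (p \<bullet> (M *v p))"
proof -
  define q where "q = M *v p"
  have "(q \<bullet> q)\<^sup>2 \<le> (q \<bullet> (M *v q)) * (p \<bullet> (M *v p))"
    using psd_cauchy_schwarz[OF sym psd, of q p] by (simp add: q_def)
  also have "\<dots> \<le> (L * (q \<bullet> q)) * (p \<bullet> (M *v p))"
    using up[of q] psd[of p] by (rule mult_right_mono)
  finally have "(q \<bullet> q) * (q \<bullet> q) \<le> (q \<bullet> q) * (L * (p \<bullet> (M *v p)))"
    by (simp add: power2_eq_square algebra_simps)
  moreover have "0 \<le> L * (p \<bullet> (M *v p))"
    using L psd[of p] by simp
  ultimately show ?thesis
    by (cases "q \<bullet> q = 0") (simp_all add: q_def inner_gt_zero_iff)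
qed

lemma coercive_matrix_surj:
  fixes M :: "real^'n^'n"
  assumes m: "0 < m" and lo: "\<And>v. m * (v \<bullet> v) \<le> v \<bullet> (M *v v)"
  shows "\<exists>q. M *v q = b"
proof -
  have "inj ((*v) M)"
  proof (rule injI)
    fix x y assume "M *v x = M *v y"
    then have "m * ((x - y) \<bullet> (x - y)) \<le> 0"
      using lo[of "x - y"] by (simp add: matrix_vector_mult_diff_distrib)
    then have "(x - y) \<bullet> (x - y) \<le> 0" using m by (simp add: mult_le_0_iff)
    then show "x = y" by (metis inner_eq_zero_iff inner_ge_zero order.antisym eq_iff_diff_eq_0)
  qed
  then have "surj ((*v) M)" by (rule linear_inj_imp_surj[OF matrix_vector_mul_linear])
  then show ?thesis by (metis surjD)
qed

section \<open>Backtracking line search along a line\<close>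

text \<open>Here \<open>q \<nu>\<close> is the objective at step size \<open>\<nu>\<close>, \<open>q0\<close> its value at the current
  point, \<open>s < 0\<close> the directional slope there, and \<open>q \<nu> \<le> q0 + \<nu> s - \<nu>\<^sup>2 a s\<close> a quadratic
  upper model.\<close>

lemma armijo_holds_for_short_steps:
  fixes q :: "real \<Rightarrow> real" and q0 :: real
  assumes model: "q \<nu> \<le> q0 + \<nu> * s - \<nu>\<^sup>2 * a * s"
    and s: "s < 0" and \<nu>: "0 < \<nu>" "\<nu> * a \<le> 1 - \<beta>"
  shows "q \<nu> \<le> q0 + \<nu> * \<beta> * s"
proof -
  have "\<nu> * s \<le> 0" using \<nu> s by (simp add: mult_nonneg_nonpos)
  then have "\<nu> * s * (1 - \<nu> * a) \<le> \<nu> * s * \<beta>"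
    using \<nu> by (intro mult_left_mono_neg) auto
  then show ?thesis using model by (simp add: algebra_simps power2_eq_square)
qed

lemma backtracking_terminates:
  fixes q :: "real \<Rightarrow> real" and q0 :: real
  assumes model: "\<And>\<nu>. q \<nu> \<le> q0 + \<nu> * s - \<nu>\<^sup>2 * a * s"
    and s: "s < 0" and a: "0 \<le> a" and \<beta>: "\<beta> < 1" and \<rho>: "0 < \<rho>" "\<rho> < 1"
  shows "\<exists>j. q (\<rho> ^ j) \<le> q0 + \<rho> ^ j * \<beta> * s"
proof -
  obtain j where j: "\<rho> ^ j < (1 - \<beta>) / (a + 1)"
    using real_arch_pow_inv[of "(1 - \<beta>) / (a + 1)" \<rho>] \<beta> a \<rho> by auto
  then have "\<rho> ^ j * (a + 1) < 1 - \<beta>" using a by (simp add: less_divide_eq)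
  moreover have "\<rho> ^ j * a \<le> \<rho> ^ j * (a + 1)" using \<rho> by simp
  ultimately have "\<rho> ^ j * a \<le> 1 - \<beta>" by linarith
  then show ?thesis using armijo_holds_for_short_steps[where q = q, OF model[of "\<rho> ^ j"] s] \<rho> by auto
qed

lemma backtracking_sufficient_decrease:
  fixes q :: "real \<Rightarrow> real" and q0 :: real
  assumes model: "\<And>\<nu>. q \<nu> \<le> q0 + \<nu> * s - \<nu>\<^sup>2 * a * s"
    and s: "s < 0" and a: "1/2 \<le> a" and \<beta>: "0 < \<beta>" "\<beta> < 1/2" and \<rho>: "0 < \<rho>" "\<rho> < 1"
  shows "\<rho> * \<beta> * (1 - \<beta>) * (- s) / a \<le> q0 - q (\<rho> ^ (LEAST j. q (\<rho> ^ j) \<le> q0 + \<rho> ^ j * \<beta> * s))"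
    (is "?bound \<le> q0 - q (\<rho> ^ ?J)")
proof -
  define P where "P j \<longleftrightarrow> q (\<rho> ^ j) \<le> q0 + \<rho> ^ j * \<beta> * s" for j
  have "P ?J"
    using LeastI_ex[OF backtracking_terminates[OF model s _ _ \<rho>]] a \<beta> by (simp add: P_def)
  then have armijo: "\<rho> ^ ?J * (\<beta> * (- s)) \<le> q0 - q (\<rho> ^ ?J)" by (simp add: P_def)
  have bound_eq: "?bound = \<rho> * (1 - \<beta>) / a * (\<beta> * (- s))" by simp
  have decrease_pos: "0 < \<beta> * (- s)" using \<beta> s by (simp add: mult_pos_neg)
  show ?thesis
  proof (cases ?J)
    case 0
    show ?thesis
    proof (cases "1 - \<beta> \<le> a")
      case True
      then have "\<rho> * (1 - \<beta>) \<le> a"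
        using \<rho> \<beta> mult_left_le_one_le[of "1 - \<beta>" \<rho>] by linarith
      then have "\<rho> * (1 - \<beta>) / a \<le> 1"
        using a by simp
      then have "\<rho> * (1 - \<beta>) / a * (\<beta> * (- s)) \<le> \<beta> * (- s)"
        using \<rho> \<beta> a decrease_pos by (intro mult_left_le_one_le) auto
      then show ?thesis using armijo bound_eq unfolding 0 by (simp only: power_0 mult_1)
    next
      case False
      text \<open>The full step is accepted and \<open>a < 1 - \<beta>\<close>, so the model bounds the decrease
        by \<open>(1 - a) (- s)\<close>, and \<open>a (1 - a) \<ge> \<beta> (1 - \<beta>)\<close> for \<open>a \<in> [1/2, 1 - \<beta>]\<close>.\<close>
      have "0 \<le> (a - \<beta>) * (1 - \<beta> - a)" using False a \<beta> by simp
      then have "\<beta> * (1 - \<beta>) \<le> a * (1 - a)" by (simp add: algebra_simps)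
      moreover have "\<rho> * (\<beta> * (1 - \<beta>)) \<le> \<beta> * (1 - \<beta>)"
        using \<beta> \<rho> by (intro mult_left_le_one_le) auto
      ultimately have "\<rho> * \<beta> * (1 - \<beta>) \<le> a * (1 - a)" by simp
      then have "\<rho> * \<beta> * (1 - \<beta>) / a \<le> 1 - a"
        using a by (simp add: pos_divide_le_eq mult.commute)
      then have "\<rho> * \<beta> * (1 - \<beta>) / a * (- s) \<le> (1 - a) * (- s)"
        using s by (intro mult_right_mono) auto
      then show ?thesis using model[of 1] unfolding 0 by (simp add: algebra_simps)
    qed
  next
    case (Suc k)
    text \<open>The step \<open>\<rho>\<^sup>k\<close> was rejected, so it is too long for the model, which bounds
      the accepted step \<open>\<rho>\<^sup>k\<^sup>+\<^sup>1\<close> from below.\<close>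
    have "\<not> P k" using not_less_Least[of k P] Suc by (simp add: P_def)
    then have "1 - \<beta> < \<rho> ^ k * a"
      using armijo_holds_for_short_steps[where q = q, OF model[of "\<rho> ^ k"] s] \<rho> by (force simp: P_def)
    then have "\<rho> * (1 - \<beta>) < \<rho> ^ ?J * a"
      using Suc \<rho> by (simp add: mult.assoc)
    then have "\<rho> * (1 - \<beta>) / a < \<rho> ^ ?J"
      using a by (simp add: pos_divide_less_eq)
    then have "\<rho> * (1 - \<beta>) / a * (\<beta> * (- s)) \<le> \<rho> ^ ?J * (\<beta> * (- s))"
      using decrease_pos by (intro mult_right_mono) auto
    then show ?thesis using armijo bound_eq by linarith
  qed
qed

section \<open>Twice continuously differentiable functions\<close>

lemma continuous_on_bilinear_form:
  fixes H :: "real^'n \<Rightarrow> real^'n^'n"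
  assumes "continuous_on UNIV H"
  shows "continuous_on UNIV (\<lambda>z. u \<bullet> (H z *v v))"
proof -
  have entries: "continuous_on UNIV (\<lambda>z. H z $ i $ j)" for i j
    by (intro continuous_on_component assms)
  show ?thesis
    unfolding inner_vec_def matrix_vector_mult_def by (auto intro!: continuous_intros entries)
qed

locale twice_differentiable =
  fixes f :: "real^'n \<Rightarrow> real"
    and g :: "real^'n \<Rightarrow> real^'n"
    and H :: "real^'n \<Rightarrow> real^'n^'n"
  assumes has_gradient: "\<And>y. (f has_derivative (\<lambda>h. g y \<bullet> h)) (at y)"
    and has_hessian: "\<And>y. (g has_derivative (\<lambda>h. H y *v h)) (at y)"
    and hessian_continuous: "continuous_on UNIV H"
begin

lemma has_real_derivative_along_line:
  "((\<lambda>s. f (a + s *\<^sub>R u)) has_real_derivative (g (a + s *\<^sub>R u) \<bullet> u)) (at s)"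
proof -
  have "((\<lambda>s. a + s *\<^sub>R u) has_derivative (\<lambda>r. r *\<^sub>R u)) (at s)"
    by (auto intro!: derivative_eq_intros)
  from diff_chain_at[OF this has_gradient]
  have "((\<lambda>s. f (a + s *\<^sub>R u)) has_derivative (\<lambda>r. g (a + s *\<^sub>R u) \<bullet> (r *\<^sub>R u))) (at s)"
    by (simp add: o_def)
  moreover have "(\<lambda>r. g (a + s *\<^sub>R u) \<bullet> (r *\<^sub>R u)) = (*) (g (a + s *\<^sub>R u) \<bullet> u)"
    by (auto simp: mult.commute)
  ultimately show ?thesis by (simp add: has_field_derivative_def)
qed

lemma gradient_has_real_derivative_along_line:
  "((\<lambda>t. g (a + t *\<^sub>R v) \<bullet> u) has_real_derivative (u \<bullet> (H (a + t *\<^sub>R v) *v v))) (at t)"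
proof -
  have "((\<lambda>s. a + s *\<^sub>R v) has_derivative (\<lambda>r. r *\<^sub>R v)) (at t)"
    by (auto intro!: derivative_eq_intros)
  from diff_chain_at[OF this has_hessian]
  have "((\<lambda>s. g (a + s *\<^sub>R v)) has_derivative (\<lambda>r. H (a + t *\<^sub>R v) *v (r *\<^sub>R v))) (at t)"
    by (simp add: o_def)
  from bounded_linear.has_derivative[OF bounded_linear_inner_left[of u] this]
  have "((\<lambda>s. g (a + s *\<^sub>R v) \<bullet> u) has_derivative (\<lambda>r. (H (a + t *\<^sub>R v) *v (r *\<^sub>R v)) \<bullet> u)) (at t)" .
  moreover have "(\<lambda>r. (H (a + t *\<^sub>R v) *v (r *\<^sub>R v)) \<bullet> u) = (*) (u \<bullet> (H (a + t *\<^sub>R v) *v v))"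
    by (auto simp: matrix_scaleR_vector_ac scaleR_matrix_vector_assoc[symmetric] inner_commute mult.commute)
  ultimately show ?thesis by (simp add: has_field_derivative_def)
qed

lemma second_order_expansion:
  "\<exists>t. f (x + d) = f x + g x \<bullet> d + (d \<bullet> (H (x + t *\<^sub>R d) *v d)) / 2"
proof -
  define D where "D = (!) [\<lambda>t. f (x + t *\<^sub>R d), \<lambda>t. g (x + t *\<^sub>R d) \<bullet> d,
    \<lambda>t. d \<bullet> (H (x + t *\<^sub>R d) *v d)]"
  have "\<forall>m t. m < 2 \<and> 0 \<le> t \<and> t \<le> 1 \<longrightarrow> (D m has_real_derivative D (Suc m) t) (at t)"
    by (auto simp: D_def less_2_cases_iff has_real_derivative_along_line
        gradient_has_real_derivative_along_line)
  from Maclaurin2[of 1 D "D 0" 2, OF _ _ this] obtain t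
    where "D 0 1 = (\<Sum>m<2. D m 0 / fact m) + D 2 t / 2" by auto
  then show ?thesis by (auto simp: D_def numeral_2_eq_2)
qed

lemma mixed_second_difference:
  assumes h: "0 < h"
  shows "\<exists>z. norm (z - y) \<le> h * (norm u + norm v) \<and>
    f (y + h *\<^sub>R u + h *\<^sub>R v) - f (y + h *\<^sub>R u) - f (y + h *\<^sub>R v) + f y = h\<^sup>2 * (u \<bullet> (H z *v v))"
proof -
  define k where "k s = f ((y + h *\<^sub>R v) + s *\<^sub>R u) - f (y + s *\<^sub>R u)" for s
  have "(k has_real_derivative (g ((y + h *\<^sub>R v) + s *\<^sub>R u) \<bullet> u - g (y + s *\<^sub>R u) \<bullet> u)) (at s)" for s
    unfolding k_def by (intro derivative_intros has_real_derivative_along_line)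
  from MVT2[OF h this] obtain s where s: "0 < s" "s < h"
    "k h - k 0 = h * (g ((y + h *\<^sub>R v) + s *\<^sub>R u) \<bullet> u - g (y + s *\<^sub>R u) \<bullet> u)"
    by auto
  define l where "l t = g ((y + s *\<^sub>R u) + t *\<^sub>R v) \<bullet> u" for t
  from MVT2[OF h gradient_has_real_derivative_along_line, of "y + s *\<^sub>R u" v u]
  obtain t where t: "0 < t" "t < h" "l h - l 0 = h * (u \<bullet> (H ((y + s *\<^sub>R u) + t *\<^sub>R v) *v v))"
    by (auto simp: l_def)
  define z where "z = (y + s *\<^sub>R u) + t *\<^sub>R v"
  have "norm (z - y) \<le> s * norm u + t * norm v"
    using norm_triangle_ineq[of "s *\<^sub>R u" "t *\<^sub>R v"] s t by (simp add: z_def)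
  also have "\<dots> \<le> h * (norm u + norm v)"
    using s t by (simp add: distrib_left add_mono mult_right_mono)
  finally have close: "norm (z - y) \<le> h * (norm u + norm v)" .
  have "f (y + h *\<^sub>R u + h *\<^sub>R v) - f (y + h *\<^sub>R u) - f (y + h *\<^sub>R v) + f y = k h - k 0"
    by (simp add: k_def add_ac)
  also have "\<dots> = h * (l h - l 0)"
    using s(3) by (simp add: l_def add_ac)
  also have "\<dots> = h\<^sup>2 * (u \<bullet> (H z *v v))"
    using t(3) by (simp add: z_def power2_eq_square)
  finally show ?thesis using close by blast
qed

lemma hessian_symmetric_form: "u \<bullet> (H y *v v) = v \<bullet> (H y *v u)"
proof -
  text \<open>Both mixed second differences of \<open>f\<close> at \<open>y\<close> coincide; letting the increment
    tend to zero along \<open>1 / (n + 1)\<close> yields the symmetry by continuity of \<open>H\<close>.\<close>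
  define c where "c = norm u + norm v"
  have "\<exists>z1 z2. norm (z1 - y) \<le> c / Suc n \<and> norm (z2 - y) \<le> c / Suc n
      \<and> u \<bullet> (H z1 *v v) = v \<bullet> (H z2 *v u)" for n
  proof -
    define h :: real where "h = 1 / Suc n"
    have h: "0 < h" by (simp add: h_def)
    obtain z1 where z1: "norm (z1 - y) \<le> h * c"
      "f (y + h *\<^sub>R u + h *\<^sub>R v) - f (y + h *\<^sub>R u) - f (y + h *\<^sub>R v) + f y
        = h\<^sup>2 * (u \<bullet> (H z1 *v v))"
      using mixed_second_difference[OF h, of y u v] by (auto simp: c_def)
    obtain z2 where z2: "norm (z2 - y) \<le> h * c"
      "f (y + h *\<^sub>R v + h *\<^sub>R u) - f (y + h *\<^sub>R v) - f (y + h *\<^sub>R u) + f y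
        = h\<^sup>2 * (v \<bullet> (H z2 *v u))"
      using mixed_second_difference[OF h, of y v u] by (auto simp: c_def add.commute)
    have "f (y + h *\<^sub>R v + h *\<^sub>R u) = f (y + h *\<^sub>R u + h *\<^sub>R v)"
      by (simp add: add_ac)
    then have "h\<^sup>2 * (u \<bullet> (H z1 *v v)) = h\<^sup>2 * (v \<bullet> (H z2 *v u))"
      using z1(2) z2(2) by linarith
    with z1(1) z2(1) h show ?thesis by (auto simp: h_def)
  qed
  then obtain z1 z2 where close: "\<And>n. norm (z1 n - y) \<le> c / Suc n" "\<And>n. norm (z2 n - y) \<le> c / Suc n"
    and eq: "\<And>n. u \<bullet> (H (z1 n) *v v) = v \<bullet> (H (z2 n) *v u)"
    by metis
  have bound: "(\<lambda>n. c / Suc n) \<longlonglongrightarrow> 0"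
    using LIMSEQ_Suc[OF lim_const_over_n] by simp
  have "(\<lambda>n. z1 n - y) \<longlonglongrightarrow> 0" "(\<lambda>n. z2 n - y) \<longlonglongrightarrow> 0"
    using close by (auto intro!: Lim_null_comparison[OF _ bound] always_eventually)
  then have lim: "z1 \<longlonglongrightarrow> y" "z2 \<longlonglongrightarrow> y" by (auto intro: LIM_zero_cancel)
  have cont: "isCont (\<lambda>z. a \<bullet> (H z *v b)) y" for a b
    using continuous_on_bilinear_form[OF hessian_continuous]
    by (simp add: continuous_on_eq_continuous_at)
  have "(\<lambda>n. u \<bullet> (H (z1 n) *v v)) \<longlonglongrightarrow> u \<bullet> (H y *v v)"
    by (rule isCont_tendsto_compose[OF cont lim(1)])
  moreover have "(\<lambda>n. u \<bullet> (H (z1 n) *v v)) \<longlonglongrightarrow> v \<bullet> (H y *v u)"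
    unfolding eq by (rule isCont_tendsto_compose[OF cont lim(2)])
  ultimately show ?thesis by (rule LIMSEQ_unique)
qed

lemma hessian_symmetric: "transpose (H y) = H y"
proof -
  have "H y $ i $ j = H y $ j $ i" for i j
    using hessian_symmetric_form[of "axis i 1" y "axis j 1"]
    by (simp add: inner_axis_matrix_vector_axis)
  then show ?thesis by (simp add: transpose_def vec_eq_iff)
qed

end

section \<open>Strongly convex functions with Lipschitz gradient\<close>

locale strongly_convex_smooth = twice_differentiable f g H
  for f :: "real^'n \<Rightarrow> real" and g H +
  fixes lmin lmax :: real
  assumes lmin_pos: "0 < lmin"
    and hessian_bounds: "\<And>y. loewner_le (lmin *\<^sub>R mat 1) (H y) \<and> loewner_le (H y) (lmax *\<^sub>R mat 1)"
begin

lemma lmin_le_lmax: "lmin \<le> lmax"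
  using hessian_bounds by (blast intro: loewner_le_scaled_identity_bounds_le)

lemma quadratic_upper_bound: "f (x + d) \<le> f x + g x \<bullet> d + lmax / 2 * (d \<bullet> d)"
proof -
  obtain t where "f (x + d) = f x + g x \<bullet> d + (d \<bullet> (H (x + t *\<^sub>R d) *v d)) / 2"
    using second_order_expansion by blast
  with loewner_le_scaled_identity_right[OF hessian_bounds[THEN conjunct2], of d "x + t *\<^sub>R d"]
  show ?thesis by simp
qed

lemma quadratic_lower_bound: "f x + g x \<bullet> d + lmin / 2 * (d \<bullet> d) \<le> f (x + d)"
proof -
  obtain t where "f (x + d) = f x + g x \<bullet> d + (d \<bullet> (H (x + t *\<^sub>R d) *v d)) / 2"
    using second_order_expansion by blast
  with loewner_le_scaled_identity_left[OF hessian_bounds[THEN conjunct1], of d "x + t *\<^sub>R d"]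
  show ?thesis by simp
qed

lemma gradient_zero_at_minimizer:
  assumes "\<And>y. f z \<le> f y"
  shows "g z = 0"
proof -
  have "(\<lambda>h. g z \<bullet> h) = (\<lambda>h. 0)"
    using has_derivative_local_min[OF has_gradient] assms by (simp add: always_eventually)
  then have "g z \<bullet> g z = 0" by metis
  then show ?thesis by simp
qed

text \<open>The Polyak--Lojasiewicz inequality: minimise the quadratic lower bound over \<open>d\<close>.\<close>

lemma suboptimality_le_gradient: "f x - f z \<le> (g x \<bullet> g x) / (2 * lmin)"
proof -
  have "0 \<le> (g x + lmin *\<^sub>R (z - x)) \<bullet> (g x + lmin *\<^sub>R (z - x))" by simp
  then have "0 \<le> g x \<bullet> g x + 2 * lmin * (g x \<bullet> (z - x)) + lmin\<^sup>2 * ((z - x) \<bullet> (z - x))"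
    by (simp add: algebra_simps inner_commute power2_eq_square)
  then have "0 \<le> (g x \<bullet> g x) / (2 * lmin) + g x \<bullet> (z - x) + lmin / 2 * ((z - x) \<bullet> (z - x))"
    using lmin_pos by (simp add: field_simps power2_eq_square)
  with quadratic_lower_bound[of x "z - x"] show ?thesis by simp
qed

lemma inner_diff_le_suboptimality:
  assumes min: "\<And>y. f z \<le> f y" and gap: "f x - f z \<le> B"
  shows "(x - z) \<bullet> (x - z) \<le> 2 / lmin * B"
proof -
  have "lmin / 2 * ((x - z) \<bullet> (x - z)) \<le> B"
    using quadratic_lower_bound[of z "x - z"] gradient_zero_at_minimizer[OF min] gap by simp
  then show ?thesis using lmin_pos by (simp add: field_simps)
qed

lemma norm_diff_le_suboptimality:
  assumes "\<And>y. f z \<le> f y" and "f x - f z \<le> B"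
  shows "norm (x - z) \<le> sqrt (2 / lmin * B)"
  unfolding norm_eq_sqrt_inner using inner_diff_le_suboptimality[OF assms] by (rule real_sqrt_le_mono)

lemma wnorm_diff_le_suboptimality:
  assumes "\<And>y. f z \<le> f y" and "f x - f z \<le> B"
  shows "wnorm (H z) (x - z) \<le> sqrt (2 * (lmax / lmin) * B)"
proof -
  have "(x - z) \<bullet> (H z *v (x - z)) \<le> lmax * ((x - z) \<bullet> (x - z))"
    by (rule loewner_le_scaled_identity_right[OF hessian_bounds[THEN conjunct2]])
  also have "\<dots> \<le> lmax * (2 / lmin * B)"
    using inner_diff_le_suboptimality[OF assms] lmin_pos lmin_le_lmax by (intro mult_left_mono) auto
  also have "\<dots> = 2 * (lmax / lmin) * B"
    by simp
  finally show ?thesis unfolding wnorm_def by (rule real_sqrt_le_mono)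
qed

lemma quadratic_model_along_direction:
  "f (x + \<nu> *\<^sub>R p) \<le> f x + \<nu> * (g x \<bullet> p) + \<nu>\<^sup>2 * (lmax / 2 * (p \<bullet> p))"
  using quadratic_upper_bound[of x "\<nu> *\<^sub>R p"] by (simp add: power2_eq_square mult_ac)

lemma alg_step_nonincreasing:
  assumes step: "alg_step f g \<beta> \<rho> M x p xn"
    and \<beta>: "0 < \<beta>" "\<beta> < 1" and \<rho>: "0 < \<rho>" "\<rho> < 1"
  shows "f xn \<le> f x"
  using step unfolding alg_step_def
proof (elim disjE conjE)
  assume descent: "g x \<bullet> p < 0"
    and xn: "xn = x + \<rho> ^ (LEAST j. f (x + \<rho> ^ j *\<^sub>R p) \<le> f x + \<rho> ^ j * \<beta> * (g x \<bullet> p)) *\<^sub>R p"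
  define a where "a = lmax / 2 * (p \<bullet> p) / - (g x \<bullet> p)"
  have "0 \<le> a"
    unfolding a_def using descent lmin_pos lmin_le_lmax by (intro divide_nonneg_pos) auto
  moreover have "f (x + \<nu> *\<^sub>R p) \<le> f x + \<nu> * (g x \<bullet> p) - \<nu>\<^sup>2 * a * (g x \<bullet> p)" for \<nu>
    using quadratic_model_along_direction[of x \<nu> p] descent by (simp add: a_def)
  ultimately have "\<exists>j. f (x + \<rho> ^ j *\<^sub>R p) \<le> f x + \<rho> ^ j * \<beta> * (g x \<bullet> p)"
    using backtracking_terminates[where q = "\<lambda>\<nu>. f (x + \<nu> *\<^sub>R p)"] descent \<beta> \<rho> by blast
  then have "f xn \<le> f x + \<rho> ^ J * \<beta> * (g x \<bullet> p)"
    if "J = (LEAST j. f (x + \<rho> ^ j *\<^sub>R p) \<le> f x + \<rho> ^ j * \<beta> * (g x \<bullet> p))" for J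
    unfolding xn that by (rule LeastI_ex)
  moreover have "\<rho> ^ j * \<beta> * (g x \<bullet> p) \<le> 0" for j
    using descent \<beta> \<rho> by (simp add: mult_pos_neg less_imp_le)
  ultimately show ?thesis by (meson add_le_same_cancel1 order.trans)
qed auto

lemma newton_step_sufficient_decrease:
  fixes M :: "real^'n^'n"
  assumes lo: "loewner_le (m *\<^sub>R mat 1) M" and m: "0 < m" "m \<le> lmax"
    and newton: "M *v p = - g x" and descent: "g x \<bullet> p < 0"
    and \<beta>: "0 < \<beta>" "\<beta> < 1/2" and \<rho>: "0 < \<rho>" "\<rho> < 1"
  shows "2 * m * \<rho> * \<beta> * (1 - \<beta>) / lmax * (p \<bullet> (M *v p))
    \<le> f x - f (x + \<rho> ^ (LEAST j. f (x + \<rho> ^ j *\<^sub>R p) \<le> f x + \<rho> ^ j * \<beta> * (g x \<bullet> p)) *\<^sub>R p)"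
proof -
  define a where "a = lmax / (2 * m)"
  have slope: "g x \<bullet> p = - (p \<bullet> (M *v p))" using newton by (simp add: inner_commute)
  have a: "1/2 \<le> a" using m by (simp add: a_def field_simps)
  have "lmax / 2 * (p \<bullet> p) = a * (m * (p \<bullet> p))" using m by (simp add: a_def field_simps)
  also have "\<dots> \<le> a * (p \<bullet> (M *v p))"
    using loewner_le_scaled_identity_left[OF lo] a by (intro mult_left_mono) auto
  finally have "lmax / 2 * (p \<bullet> p) \<le> - a * (g x \<bullet> p)" using slope by simp
  then have curvature: "\<nu>\<^sup>2 * (lmax / 2 * (p \<bullet> p)) \<le> \<nu>\<^sup>2 * (- a * (g x \<bullet> p))" for \<nu>
    by (rule mult_left_mono) simp
  have "f (x + \<nu> *\<^sub>R p) \<le> f x + \<nu> * (g x \<bullet> p) - \<nu>\<^sup>2 * a * (g x \<bullet> p)" for \<nu>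
  proof -
    have "\<nu>\<^sup>2 * (- a * (g x \<bullet> p)) = - (\<nu>\<^sup>2 * a * (g x \<bullet> p))" by simp
    then show ?thesis using quadratic_model_along_direction[of x \<nu> p] curvature[of \<nu>] by linarith
  qed
  from backtracking_sufficient_decrease[where q = "\<lambda>\<nu>. f (x + \<nu> *\<^sub>R p)", OF this descent a \<beta> \<rho>]
  show ?thesis using m slope by (simp add: a_def field_simps)
qed

lemma alg_step_contraction:
  fixes M :: "real^'n^'n"
  assumes min: "\<And>y. f z \<le> f y" and sym: "transpose M = M"
    and lo: "loewner_le (m *\<^sub>R mat 1) M" and up: "loewner_le M (L *\<^sub>R mat 1)"
    and m: "0 < m" "m \<le> lmax"
    and step: "alg_step f g \<beta> \<rho> M x p xn"
    and \<beta>: "0 < \<beta>" "\<beta> < 1/2" and \<rho>: "0 < \<rho>" "\<rho> < 1"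
  shows "f xn - f z \<le> (1 - 4 * \<rho> * \<beta> * (1 - \<beta>) * m * lmin / (lmax * L)) * (f x - f z)"
proof -
  define \<phi> where "\<phi> = 4 * \<rho> * \<beta> * (1 - \<beta>) * m * lmin / (lmax * L)"
  have L: "0 < L" using loewner_le_scaled_identity_bounds_le[OF lo up] m by simp
  have psd: "0 \<le> v \<bullet> (M *v v)" for v
    using loewner_le_scaled_identity_left[OF lo, of v] m by (meson inner_ge_zero less_imp_le mult_nonneg_nonneg order.trans)
  have "\<phi> * (f x - f z) \<le> f x - f xn"
    using step unfolding alg_step_def
  proof (elim disjE conjE)
    assume "\<nexists>q. M *v q = - g x"
    then show ?thesis
      using coercive_matrix_surj[OF m(1) loewner_le_scaled_identity_left[OF lo]] by blast
  next
    assume newton: "M *v p = - g x" and "0 \<le> g x \<bullet> p" and "xn = x"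
    then have "m * (p \<bullet> p) \<le> 0"
      using loewner_le_scaled_identity_left[OF lo, of p] by (simp add: inner_commute)
    then have "p \<bullet> p \<le> 0" using m by (simp add: mult_le_0_iff)
    then have "g x = 0" using newton by (metis inner_eq_zero_iff inner_ge_zero order.antisym neg_0_equal_iff_equal matrix_vector_mult_0_right)
    then show ?thesis using suboptimality_le_gradient[of x z] min[of x] \<open>xn = x\<close> by simp
  next
    assume newton: "M *v p = - g x" and descent: "g x \<bullet> p < 0"
      and xn: "xn = x + \<rho> ^ (LEAST j. f (x + \<rho> ^ j *\<^sub>R p) \<le> f x + \<rho> ^ j * \<beta> * (g x \<bullet> p)) *\<^sub>R p"
    text \<open>The Newton decrement \<open>p\<^sup>T M p\<close> controls the gradient, hence the suboptimality.\<close>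
    have "(M *v p) \<bullet> (M *v p) \<le> L * (p \<bullet> (M *v p))"
      using psd_image_inner_le[OF sym psd loewner_le_scaled_identity_right[OF up]] L by simp
    then have "g x \<bullet> g x \<le> L * (p \<bullet> (M *v p))" using newton by simp
    then have "(g x \<bullet> g x) / (2 * lmin) \<le> L * (p \<bullet> (M *v p)) / (2 * lmin)"
      using lmin_pos by (simp add: divide_right_mono)
    then have "f x - f z \<le> L * (p \<bullet> (M *v p)) / (2 * lmin)"
      using suboptimality_le_gradient[of x z] by linarith
    then have "\<phi> * (f x - f z) \<le> \<phi> * (L * (p \<bullet> (M *v p)) / (2 * lmin))"
      using \<beta> \<rho> m L lmin_pos by (intro mult_left_mono) (auto simp: \<phi>_def)
    also have "\<dots> = 2 * m * \<rho> * \<beta> * (1 - \<beta>) / lmax * (p \<bullet> (M *v p))"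
      using L lmin_pos m by (simp add: \<phi>_def field_simps)
    also have "\<dots> \<le> f x - f xn"
      unfolding xn by (rule newton_step_sufficient_decrease[OF lo m newton descent \<beta> \<rho>])
    finally show ?thesis .
  qed
  then show ?thesis by (simp add: \<phi>_def algebra_simps)
qed

end

section \<open>Linear convergence of the averaged Newton iteration\<close>

lemma linear_convergence_from_contraction:
  fixes F :: "nat \<Rightarrow> real"
  assumes nonincreasing: "\<And>t. F (Suc t) \<le> F t"
    and contraction: "\<And>t. T \<le> t \<Longrightarrow> F (Suc t) - c \<le> r * (F t - c)"
    and r: "0 \<le> r" and "T \<le> t"
  shows "F t - c \<le> (F 0 - c) * r ^ (t - T)"
proof -
  have "F (T + k) - c \<le> r ^ k * (F T - c)" for k
  proof (induction k)
    case (Suc k)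
    have "F (T + Suc k) - c \<le> r * (F (T + k) - c)" using contraction[of "T + k"] by simp
    also have "\<dots> \<le> r * (r ^ k * (F T - c))" using Suc r by (rule mult_left_mono)
    finally show ?case by simp
  qed simp
  then have "F t - c \<le> r ^ (t - T) * (F T - c)"
    using \<open>T \<le> t\<close> by (metis le_add_diff_inverse)
  also have "\<dots> \<le> r ^ (t - T) * (F 0 - c)"
    using decseq_SucI[of F, OF nonincreasing] r by (simp add: decseq_def mult_left_mono)
  finally show ?thesis by (simp add: mult.commute)
qed

lemma newton_rate_le_one:
  fixes \<rho> \<beta> \<epsilon> \<kappa> :: real
  assumes "0 < \<rho>" "\<rho> < 1" "0 < \<beta>" "\<beta> < 1/2" "0 < \<epsilon>" "\<epsilon> < 1" "1 \<le> \<kappa>"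
  shows "4 * \<rho> * \<beta> * (1 - \<beta>) * (1 - \<epsilon>) / (\<kappa>\<^sup>2 * (1 + \<epsilon>)) \<le> 1"
proof -
  have "0 \<le> (2 * \<beta> - 1)\<^sup>2" by simp
  then have \<beta>_factor: "4 * \<beta> * (1 - \<beta>) \<le> 1" by (simp add: algebra_simps power2_eq_square)
  have \<rho>_factor: "\<rho> * (1 - \<epsilon>) \<le> 1" using assms by (intro mult_le_one) auto
  have "4 * \<beta> * (1 - \<beta>) * (\<rho> * (1 - \<epsilon>)) \<le> 1"
    using mult_le_one[OF \<beta>_factor _ \<rho>_factor] assms by simp
  also have "1 \<le> \<kappa>\<^sup>2 * (1 + \<epsilon>)"
    using assms one_le_power[of \<kappa> 2] mult_mono[of 1 "\<kappa>\<^sup>2" 1 "1 + \<epsilon>"] by simp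
  finally show ?thesis
    using assms by (simp add: pos_divide_le_eq mult_ac)
qed

theorem mainTheorem3:
  fixes f :: "real^'n \<Rightarrow> real"
    and g :: "real^'n \<Rightarrow> real^'n"
    and H :: "real^'n \<Rightarrow> real^'n^'n"
    and lmin lmax \<beta> \<rho> \<epsilon> :: real
    and xstar :: "real^'n"
    and w :: "int \<Rightarrow> real"
    and E :: "nat \<Rightarrow> real^'n^'n"
    and x p :: "nat \<Rightarrow> real^'n"
    and T1 :: nat
  assumes grad: "\<And>y. (f has_derivative (\<lambda>h. g y \<bullet> h)) (at y)"
    and hess: "\<And>y. (g has_derivative (\<lambda>h. H y *v h)) (at y)"
    and hess_cont: "continuous_on UNIV H"
    and lmin_pos: "0 < lmin" and lmin_le: "lmin \<le> lmax"
    and hess_bounds: "\<And>y. loewner_le (lmin *\<^sub>R mat 1) (H y) \<and> loewner_le (H y) (lmax *\<^sub>R mat 1)"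
    and xstar_min: "\<And>y. y \<noteq> xstar \<Longrightarrow> f xstar < f y"
    and w_init: "w (-1) = 0"
    and w_mono: "\<And>s t. -1 \<le> s \<Longrightarrow> s \<le> t \<Longrightarrow> w s \<le> w t"
    and w_pos: "\<And>t. 0 \<le> t \<Longrightarrow> 0 < w t"
    and beta: "0 < \<beta>" "\<beta> < 1/2"
    and rho: "0 < \<rho>" "\<rho> < 1"
    and E_sym: "\<And>t. transpose (E t) = E t"
    and steps: "\<And>t. alg_step f g \<beta> \<rho>
                  (Htil_seq w (\<lambda>s. H (x s) + E s) t) (x t) (p t) (x (Suc t))"
    and eps: "0 < \<epsilon>" "\<epsilon> < 1"
    and Htil_bounds: "\<And>t. T1 \<le> t \<Longrightarrow>
          loewner_le (((1 - \<epsilon>) * lmin) *\<^sub>R mat 1) (Htil_seq w (\<lambda>s. H (x s) + E s) t)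
        \<and> loewner_le (Htil_seq w (\<lambda>s. H (x s) + E s) t) (((1 + \<epsilon>) * lmax) *\<^sub>R mat 1)"
  shows "let \<kappa> = lmax / lmin;
             \<phi> = 4 * \<rho> * \<beta> * (1 - \<beta>) * (1 - \<epsilon>) / (\<kappa>\<^sup>2 * (1 + \<epsilon>))
         in (\<forall>t\<ge>T1. f (x (Suc t)) - f xstar \<le> (1 - \<phi>) * (f (x t) - f xstar))
          \<and> (\<forall>t\<ge>T1. norm (x t - xstar)
                 \<le> sqrt (2 / lmin * (f (x 0) - f xstar) * (1 - \<phi>) ^ (t - T1)))
          \<and> (\<forall>t\<ge>T1. wnorm (H xstar) (x t - xstar)
                 \<le> sqrt (2 * \<kappa> * (f (x 0) - f xstar) * (1 - \<phi>) ^ (t - T1)))"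
proof -
  interpret strongly_convex_smooth f g H lmin lmax
    using grad hess hess_cont lmin_pos hess_bounds by unfold_locales auto
  define \<phi> where "\<phi> = 4 * \<rho> * \<beta> * (1 - \<beta>) * (1 - \<epsilon>) / ((lmax / lmin)\<^sup>2 * (1 + \<epsilon>))"
  have min: "f xstar \<le> f y" for y using xstar_min[of y] by (cases "y = xstar") auto
  have sym: "transpose (Htil_seq w (\<lambda>s. H (x s) + E s) t) = Htil_seq w (\<lambda>s. H (x s) + E s) t" for t
    by (rule transpose_Htil_seq) (simp add: transpose_add E_sym hessian_symmetric)
  have rate: "\<phi> = 4 * \<rho> * \<beta> * (1 - \<beta>) * ((1 - \<epsilon>) * lmin) * lmin / (lmax * ((1 + \<epsilon>) * lmax))"
    using lmin_pos lmin_le eps by (simp add: \<phi>_def field_simps power2_eq_square)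
  have contraction: "f (x (Suc t)) - f xstar \<le> (1 - \<phi>) * (f (x t) - f xstar)" if "T1 \<le> t" for t
    unfolding rate using Htil_bounds[OF that] lmin_pos lmin_le eps
    by (intro alg_step_contraction[OF min sym _ _ _ _ steps beta rho])
       (auto intro: mult_le_one order.trans[of _ lmin lmax] mult_left_le_one_le)
  have "\<phi> \<le> 1"
    unfolding \<phi>_def using rho beta eps lmin_pos lmin_le by (intro newton_rate_le_one) auto
  then have gap: "f (x t) - f xstar \<le> (f (x 0) - f xstar) * (1 - \<phi>) ^ (t - T1)" if "T1 \<le> t" for t
    using alg_step_nonincreasing[OF steps] beta rho contraction that
    by (intro linear_convergence_from_contraction) auto
  have "norm (x t - xstar) \<le> sqrt (2 / lmin * (f (x 0) - f xstar) * (1 - \<phi>) ^ (t - T1))"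
    if "T1 \<le> t" for t
    using norm_diff_le_suboptimality[OF min gap[OF that]] by (simp only: mult.assoc)
  moreover have "wnorm (H xstar) (x t - xstar)
      \<le> sqrt (2 * (lmax / lmin) * (f (x 0) - f xstar) * (1 - \<phi>) ^ (t - T1))" if "T1 \<le> t" for t
    using wnorm_diff_le_suboptimality[OF min gap[OF that]] by (simp only: mult.assoc)
  ultimately show ?thesis
    unfolding Let_def \<phi>_def[symmetric] using contraction by blast
qed

end
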